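(* Let $\bm{N}=(N_0,\ldots,N_{n-1},-\sum_iN_i)$ and $\bm{M}=(M_0,\ldots,M_{n-1},-\sum_iM_i)$ with all $N_i,M_i\in\mathbb{Z}_{\ge0}$ and $N_i\ge M_i$ for every $i$. Then $K_n(\bm{N})\ge K_n(\bm{M})$.
   Context: $K_n(\bm{N})$ is the number of integer vectors $(f_{ij})_{0\le i<j\le n}\in\mathbb{Z}_{\ge0}^{\binom{n+1}{2}}$ with $\sum_{j>i} f_{ij}-\sum_{k<i} f_{ki}=N_i$ for every $i\in\{0,\ldots,n\}$. *)

theory Defs
  imports Main
begin

text \<open>Flows f, indexed by pairs (i,j) with 0 <= i < j <= n, represented as functions
  nat \<times> nat \<Rightarrow> nat that vanish outside that index set.\<close>

definition flows :: "nat \<Rightarrow> (nat \<Rightarrow> int) \<Rightarrow> (nat \<times> nat \<Rightarrow> nat) set" where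
  "flows n N = {f. (\<forall>i j. \<not> (i < j \<and> j \<le> n) \<longrightarrow> f (i, j) = 0) \<and>
     (\<forall>i\<le>n. (\<Sum>j\<in>{i<..n}. int (f (i, j))) - (\<Sum>k<i. int (f (k, i))) = N i)}"

definition K :: "nat \<Rightarrow> (nat \<Rightarrow> int) \<Rightarrow> nat" where
  "K n N = card (flows n N)"

end

theory Submission
  imports Defs
begin

text \<open>Pushing the surplus \<open>N i - M i\<close> of each source \<open>i < n\<close> directly along the edge \<open>(i, n)\<close>
  into the sink turns every flow for \<open>M\<close> injectively into a flow for \<open>N\<close>. Comparing cardinalities needs the flow sets to be finite: pairing a flow
  with the potential \<open>-i\<close> gives \<open>\<Sum> f(i,j) (j - i) = - \<Sum> i N i\<close>, and since every edge goes
  upwards this bounds each entry of the flow.\<close>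

lemma flows_vanish:
  assumes "f \<in> flows n N" and "\<not> (i < j \<and> j \<le> n)"
  shows "f (i, j) = 0"
  using assms unfolding flows_def by auto

lemma flows_balance:
  assumes f: "f \<in> flows n N" and i: "i \<le> n"
  shows "(\<Sum>j\<le>n. int (f (i, j))) - (\<Sum>k\<le>n. int (f (k, i))) = N i"
proof -
  have "(\<Sum>j\<le>n. int (f (i, j))) = (\<Sum>j\<in>{i<..n}. int (f (i, j)))"
    by (rule sum.mono_neutral_right) (auto simp: flows_vanish[OF f])
  moreover have "(\<Sum>k\<le>n. int (f (k, i))) = (\<Sum>k<i. int (f (k, i)))"
    using i by (intro sum.mono_neutral_right) (auto simp: flows_vanish[OF f])
  ultimately show ?thesis
    using f i unfolding flows_def by auto
qed

lemma flows_cong: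
  assumes "\<And>i. i \<le> n \<Longrightarrow> N i = N' i"
  shows "flows n N = flows n N'"
  using assms unfolding flows_def by auto

lemma flows_potential_sum:
  fixes p :: "nat \<Rightarrow> int"
  assumes f: "f \<in> flows n N"
  shows "(\<Sum>i\<le>n. p i * N i) = (\<Sum>i\<le>n. \<Sum>j\<le>n. int (f (i, j)) * (p i - p j))"
proof -
  have "(\<Sum>i\<le>n. p i * N i)
      = (\<Sum>i\<le>n. \<Sum>j\<le>n. p i * int (f (i, j))) - (\<Sum>i\<le>n. \<Sum>k\<le>n. p i * int (f (k, i)))"
    by (simp add: flows_balance[OF f, symmetric] right_diff_distrib sum_distrib_left sum_subtractf)
  also have "(\<Sum>i\<le>n. \<Sum>k\<le>n. p i * int (f (k, i))) = (\<Sum>k\<le>n. \<Sum>i\<le>n. p i * int (f (k, i)))"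
    by (rule sum.swap)
  finally show ?thesis
    by (simp add: sum_subtractf algebra_simps)
qed

lemma flows_entry_bound:
  assumes f: "f \<in> flows n N"
  shows "int (f (a, b)) \<le> (\<Sum>i\<le>n. - int i * N i)"
proof -
  have edge_le_weighted: "int (f (i, j)) \<le> int (f (i, j)) * (int j - int i)" for i j
  proof (cases "i < j")
    case True
    then show ?thesis by (simp add: mult_le_cancel_left1)
  next
    case False
    then show ?thesis by (simp add: flows_vanish[OF f])
  qed
  have "int (f (a, b)) \<le> (\<Sum>i\<le>n. \<Sum>j\<le>n. int (f (i, j)))"
  proof (cases "a \<le> n \<and> b \<le> n")
    case True
    have "int (f (a, b)) \<le> (\<Sum>j\<le>n. int (f (a, j)))"
      using True by (intro member_le_sum) auto
    also have "\<dots> \<le> (\<Sum>i\<le>n. \<Sum>j\<le>n. int (f (i, j)))"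
      using True by (intro member_le_sum[where f = "\<lambda>i. \<Sum>j\<le>n. int (f (i, j))"]) (auto intro: sum_nonneg)
    finally show ?thesis .
  next
    case False
    then have "f (a, b) = 0"
      using flows_vanish[OF f] by auto
    then show ?thesis
      by (simp add: sum_nonneg)
  qed
  also have "\<dots> \<le> (\<Sum>i\<le>n. \<Sum>j\<le>n. int (f (i, j)) * (int j - int i))"
    by (intro sum_mono edge_le_weighted)
  also have "\<dots> = (\<Sum>i\<le>n. - int i * N i)"
    unfolding flows_potential_sum[OF f, of "\<lambda>i. - int i"] by simp
  finally show ?thesis .
qed

lemma finite_flows: "finite (flows n N)"
proof -
  define C where "C = nat (\<Sum>i\<le>n. - int i * N i)"
  define S where "S = {..n} \<times> {..n}"
  have "flows n N \<subseteq> {f. \<forall>x. (x \<in> S \<longrightarrow> f x \<in> {0..C}) \<and> (x \<notin> S \<longrightarrow> f x = 0)}"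
  proof (intro subsetI CollectI allI conjI impI)
    fix f and x :: "nat \<times> nat" assume f: "f \<in> flows n N"
    obtain a b where x: "x = (a, b)" by fastforce
    show "f x \<in> {0..C}"
      using flows_entry_bound[OF f, of a b] unfolding C_def x by simp
    show "f x = 0" if "x \<notin> S"
      using that flows_vanish[OF f, of a b] unfolding S_def x by auto
  qed
  moreover have "finite {f. \<forall>x. (x \<in> S \<longrightarrow> f x \<in> {0..C}) \<and> (x \<notin> S \<longrightarrow> f x = (0::nat))}"
    by (rule finite_set_of_finite_funs) (auto simp: S_def)
  ultimately show ?thesis
    by (rule finite_subset)
qed

definition push_to_sink :: "nat \<Rightarrow> (nat \<Rightarrow> nat) \<Rightarrow> (nat \<times> nat \<Rightarrow> nat) \<Rightarrow> nat \<times> nat \<Rightarrow> nat" where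
  "push_to_sink n D f = (\<lambda>(i, j). if j = n \<and> i < n then f (i, j) + D i else f (i, j))"

lemma inj_push_to_sink: "inj (push_to_sink n D)"
proof (rule injI)
  fix f g assume eq: "push_to_sink n D f = push_to_sink n D g"
  show "f = g"
  proof
    fix x show "f x = g x"
      using fun_cong[OF eq, of x] by (cases x) (auto simp: push_to_sink_def split: if_splits)
  qed
qed

lemma push_to_sink_flows:
  assumes f: "f \<in> flows n M"
  shows "push_to_sink n D f \<in> flows n (\<lambda>i. if i < n then M i + int (D i) else M n - (\<Sum>k<n. int (D k)))"
  unfolding flows_def
proof (intro CollectI conjI allI impI)
  fix i j assume "\<not> (i < j \<and> j \<le> n)"
  then show "push_to_sink n D f (i, j) = 0"
    using flows_vanish[OF f] by (auto simp: push_to_sink_def)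
next
  fix i assume i: "i \<le> n"
  have balance: "(\<Sum>j\<in>{i<..n}. int (f (i, j))) - (\<Sum>k<i. int (f (k, i))) = M i"
    using f i unfolding flows_def by auto
  show "(\<Sum>j\<in>{i<..n}. int (push_to_sink n D f (i, j))) - (\<Sum>k<i. int (push_to_sink n D f (k, i)))
      = (if i < n then M i + int (D i) else M n - (\<Sum>k<n. int (D k)))"
  proof (cases "i < n")
    case True
    have "(\<Sum>j\<in>{i<..n}. int (push_to_sink n D f (i, j)))
        = (\<Sum>j\<in>{i<..n}. int (f (i, j)) + (if j = n then int (D i) else 0))"
      using True by (intro sum.cong) (auto simp: push_to_sink_def)
    moreover have "(\<Sum>k<i. int (push_to_sink n D f (k, i))) = (\<Sum>k<i. int (f (k, i)))"
      using True by (intro sum.cong) (auto simp: push_to_sink_def)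
    ultimately show ?thesis
      using True balance by (simp add: sum.distrib)
  next
    case False
    with i have "i = n" by simp
    have "(\<Sum>k<n. int (push_to_sink n D f (k, n))) = (\<Sum>k<n. int (f (k, n)) + int (D k))"
      by (intro sum.cong) (auto simp: push_to_sink_def)
    then show ?thesis
      using balance \<open>i = n\<close> by (simp add: sum.distrib)
  qed
qed

lemma K_mono_sources:
  assumes "\<forall>i<n. M i \<le> N i"
    and "N n - M n = - (\<Sum>i<n. N i - M i)"
  shows "K n M \<le> K n N"
proof -
  define D where "D i = nat (N i - M i)" for i
  have "flows n (\<lambda>i. if i < n then M i + int (D i) else M n - (\<Sum>k<n. int (D k))) = flows n N"
    using assms by (intro flows_cong) (auto simp: D_def sum_subtractf)
  then have "push_to_sink n D ` flows n M \<subseteq> flows n N"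
    using push_to_sink_flows by blast
  then show ?thesis
    unfolding K_def by (intro card_inj_on_le[OF inj_on_subset[OF inj_push_to_sink] _ finite_flows]) auto
qed

theorem corollary2p9:
  fixes n :: nat and N M :: "nat \<Rightarrow> int"
  assumes "\<forall>i<n. 0 \<le> M i \<and> M i \<le> N i"
    and "N n = - (\<Sum>i<n. N i)"
    and "M n = - (\<Sum>i<n. M i)"
  shows "K n N \<ge> K n M"
  using assms by (intro K_mono_sources) (auto simp: sum_subtractf)

end
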